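(* Let $n\ge2$, let $u$ be a polar $n$-complex number and $m$ an integer; if $m\le0$ assume $v_+\ne0$, $v_-\ne0$ (for even $n$) and $\rho_k\ne0$ for all $k$. Then, for even $n$, $$u^m=e_+v_+^m+e_-v_-^m+\sum_{k=1}^{n/2-1}\rho_k^m\big(e_k\cos m\phi_k+\tilde e_k\sin m\phi_k\big),$$ and for odd $n$, $$u^m=e_+v_+^m+\sum_{k=1}^{(n-1)/2}\rho_k^m\big(e_k\cos m\phi_k+\tilde e_k\sin m\phi_k\big),$$ where a term with $\rho_k=0$ (possible only for $m\ge1$) is interpreted as $0$.
   Context: Polar $n$-complex numbers: $u=x_0+h_1x_1+\cdots+h_{n-1}x_{n-1}$, $x_j\in\mathbb{R}$, $h_0=1$, componentwise addition, bilinear multiplication $h_jh_k=h_{(j+k)\bmod n}$. Canonical variables: $v_+=\sum_px_p$; for even $n$, $v_-=\sum_p(-1)^px_p$; for $k=1,\dots,\lfloor(n-1)/2\rfloor$, $v_k=\sum_px_p\cos(2\pi kp/n)$, $\tilde v_k=\sum_px_p\sin(2\pi kp/n)$, $\rho_k=\sqrt{v_k^2+\tilde v_k^2}$, and for $\rho_k>0$, $\phi_k$ with $\cos\phi_k=v_k/\rho_k$, $\sin\phi_k=\tilde v_k/\rho_k$. Canonical base: $e_+=\frac1n\sum_ph_p$, $e_-=\frac1n\sum_p(-1)^ph_p$ (even $n$), $e_k=\frac2n\sum_p\cos(2\pi kp/n)h_p$, $\tilde e_k=\frac2n\sum_p\sin(2\pi kp/n)h_p$. *)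

theory Defs
  imports "HOL-Analysis.Analysis"
begin

text \<open>A polar n-complex number x_0 + h_1 x_1 + ... + h_(n-1) x_(n-1) is represented by its
  coefficient function u :: nat => real, with u p = x_p for p < n and u p = 0 for p >= n.\<close>

definition pc_valid :: "nat \<Rightarrow> (nat \<Rightarrow> real) \<Rightarrow> bool" where
  "pc_valid n u \<longleftrightarrow> (\<forall>j\<ge>n. u j = 0)"

text \<open>Multiplication induced by h_j h_k = h_((j+k) mod n).\<close>
definition pc_mult :: "nat \<Rightarrow> (nat \<Rightarrow> real) \<Rightarrow> (nat \<Rightarrow> real) \<Rightarrow> (nat \<Rightarrow> real)" where
  "pc_mult n u w = (\<lambda>j. if j < n then
      (\<Sum>p<n. \<Sum>q<n. if (p + q) mod n = j then u p * w q else 0) else 0)"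

definition pc_one :: "nat \<Rightarrow> (nat \<Rightarrow> real)" where
  "pc_one n = (\<lambda>j. if j = 0 \<and> 0 < n then 1 else 0)"

fun pc_pow :: "nat \<Rightarrow> (nat \<Rightarrow> real) \<Rightarrow> nat \<Rightarrow> (nat \<Rightarrow> real)" where
  "pc_pow n u 0 = pc_one n"
| "pc_pow n u (Suc k) = pc_mult n u (pc_pow n u k)"

definition pc_inv :: "nat \<Rightarrow> (nat \<Rightarrow> real) \<Rightarrow> (nat \<Rightarrow> real)" where
  "pc_inv n u = (THE w. pc_valid n w \<and> pc_mult n u w = pc_one n)"

definition pc_ipow :: "nat \<Rightarrow> (nat \<Rightarrow> real) \<Rightarrow> int \<Rightarrow> (nat \<Rightarrow> real)" where
  "pc_ipow n u m = (if 0 \<le> m then pc_pow n u (nat m) else pc_pow n (pc_inv n u) (nat (- m)))"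

definition v_plus :: "nat \<Rightarrow> (nat \<Rightarrow> real) \<Rightarrow> real" where
  "v_plus n u = (\<Sum>p<n. u p)"

definition v_minus :: "nat \<Rightarrow> (nat \<Rightarrow> real) \<Rightarrow> real" where
  "v_minus n u = (\<Sum>p<n. (-1) ^ p * u p)"

definition v_c :: "nat \<Rightarrow> nat \<Rightarrow> (nat \<Rightarrow> real) \<Rightarrow> real" where
  "v_c n k u = (\<Sum>p<n. u p * cos (2 * pi * real k * real p / real n))"

definition v_s :: "nat \<Rightarrow> nat \<Rightarrow> (nat \<Rightarrow> real) \<Rightarrow> real" where
  "v_s n k u = (\<Sum>p<n. u p * sin (2 * pi * real k * real p / real n))"

definition rho :: "nat \<Rightarrow> nat \<Rightarrow> (nat \<Rightarrow> real) \<Rightarrow> real" where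
  "rho n k u = sqrt ((v_c n k u)\<^sup>2 + (v_s n k u)\<^sup>2)"

text \<open>Azimuthal angle: for rho > 0, cos phi = v_k / rho, sin phi = tilde v_k / rho.
  (For rho = 0 the value is irrelevant; Arg 0 = 0.)\<close>
definition phi :: "nat \<Rightarrow> nat \<Rightarrow> (nat \<Rightarrow> real) \<Rightarrow> real" where
  "phi n k u = Arg (Complex (v_c n k u) (v_s n k u))"

definition e_plus :: "nat \<Rightarrow> (nat \<Rightarrow> real)" where
  "e_plus n = (\<lambda>j. if j < n then 1 / real n else 0)"

definition e_minus :: "nat \<Rightarrow> (nat \<Rightarrow> real)" where
  "e_minus n = (\<lambda>j. if j < n then (-1) ^ j / real n else 0)"

definition e_c :: "nat \<Rightarrow> nat \<Rightarrow> (nat \<Rightarrow> real)" where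
  "e_c n k = (\<lambda>j. if j < n then 2 / real n * cos (2 * pi * real k * real j / real n) else 0)"

definition e_s :: "nat \<Rightarrow> nat \<Rightarrow> (nat \<Rightarrow> real)" where
  "e_s n k = (\<lambda>j. if j < n then 2 / real n * sin (2 * pi * real k * real j / real n) else 0)"

end

theory Submission
  imports Defs
begin

(* The canonical variables are the values of the discrete Fourier transform
   chi_k(u) = sum_p x_p omega^(k p), omega = exp(2 pi i / n): chi_0 = v_+, chi_(n/2) = v_-
   and chi_k = v_k + i tilde v_k = rho_k exp(i phi_k).  The transform turns the cyclic
   product h_j h_k = h_((j+k) mod n) into pointwise multiplication, so chi_k(u^m) = chi_k(u)^m,
   also for m < 0, as u is invertible as soon as no chi_k(u) vanishes.  Fourier inversion
   recovers u^m from these values, and as chi_(n-k) is the conjugate of chi_k, grouping the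
   terms k and n - k turns the inversion formula into the real expansion in the canonical base. *)

definition dft_kernel :: "nat \<Rightarrow> int \<Rightarrow> nat \<Rightarrow> complex" where
  "dft_kernel n k p = cis (2 * pi * of_int k * of_nat p / of_nat n)"

definition dft :: "nat \<Rightarrow> (nat \<Rightarrow> complex) \<Rightarrow> int \<Rightarrow> complex" where
  "dft n x k = (\<Sum>p<n. x p * dft_kernel n k p)"

definition idft :: "nat \<Rightarrow> (int \<Rightarrow> complex) \<Rightarrow> nat \<Rightarrow> complex" where
  "idft n c p = (\<Sum>k<n. c (int k) * dft_kernel n (- int k) p) / of_nat n"

lemma dft_kernel_add_left: "dft_kernel n (k + l) p = dft_kernel n k p * dft_kernel n l p"
  unfolding dft_kernel_def cis_mult by (simp add: algebra_simps add_divide_distrib)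

lemma dft_kernel_add_right: "dft_kernel n k (p + q) = dft_kernel n k p * dft_kernel n k q"
  unfolding dft_kernel_def cis_mult by (simp add: algebra_simps add_divide_distrib)

lemma dft_kernel_uminus: "dft_kernel n (- k) p = cnj (dft_kernel n k p)"
  unfolding dft_kernel_def by (simp add: cis_cnj)

lemma dft_kernel_mod_left:
  assumes "n > 0"
  shows "dft_kernel n (k mod int n) p = dft_kernel n k p"
proof -
  have "2 * pi * of_int k * of_nat p / of_nat n
      = 2 * pi * of_int (k mod int n) * of_nat p / of_nat n + 2 * pi * of_int (k div int n * int p)"
  proof -
    have "real_of_int k = real_of_int (k mod int n) + real n * real_of_int (k div int n)"
      by (metis of_int_add of_int_mult of_int_of_nat_eq mod_div_mult_eq add.commute mult.commute)
    then show ?thesis using assms by (simp add: field_simps)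
  qed
  then show ?thesis
    unfolding dft_kernel_def by (simp add: cis_mult [symmetric])
qed

lemma dft_kernel_mod_right:
  assumes "n > 0"
  shows "dft_kernel n k (p mod n) = dft_kernel n k p"
proof -
  have "2 * pi * of_int k * of_nat p / of_nat n
      = 2 * pi * of_int k * of_nat (p mod n) / of_nat n + 2 * pi * of_int (k * int (p div n))"
  proof -
    have "real p = real (p mod n) + real n * real (p div n)"
      by (metis of_nat_add of_nat_mult mod_div_mult_eq add.commute mult.commute)
    then show ?thesis using assms by (simp add: field_simps)
  qed
  then show ?thesis
    unfolding dft_kernel_def by (simp add: cis_mult [symmetric])
qed

lemma sum_dft_kernel:
  assumes "n > 0"
  shows "(\<Sum>p<n. dft_kernel n d p) = (if int n dvd d then of_nat n else 0)"
proof -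
  define z where "z = cis (2 * pi * of_int d / of_nat n)"
  have kernel_power: "dft_kernel n d p = z ^ p" for p
    unfolding z_def dft_kernel_def Complex.DeMoivre
    by (rule arg_cong [where f = cis]) (simp add: field_simps)
  show ?thesis
  proof (cases "int n dvd d")
    case True
    then obtain e where "d = int n * e" by blast
    then have "z = cis (2 * pi * of_int e)" using assms unfolding z_def by (simp add: mult.assoc)
    then have "z = 1" by simp
    then show ?thesis using True kernel_power by simp
  next
    case False
    have "z \<noteq> 1"
    proof
      assume "z = 1"
      then have "cos (2 * pi * of_int d / of_nat n) = 1"
        unfolding z_def by (metis cis.sel(1) one_complex.sel(1))
      then obtain i :: int where "2 * pi * of_int d / of_nat n = of_int i * 2 * pi"
        using cos_one_2pi_int by blast
      then have "real_of_int d = of_int (i * int n)" using assms by (simp add: field_simps)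
      then have "d = i * int n" by (simp only: of_int_eq_iff)
      then show False using False by simp
    qed
    moreover have "z ^ n = 1"
    proof -
      have "z ^ n = cis (2 * pi * of_int d)"
        unfolding z_def Complex.DeMoivre using assms by simp
      then show ?thesis by simp
    qed
    ultimately show ?thesis using False kernel_power by (simp add: sum_gp_strict)
  qed
qed

lemma int_dvd_diff_iff_eq:
  assumes "p < n" "j < n"
  shows "int n dvd (int p - int j) \<longleftrightarrow> p = j"
proof
  assume dvd: "int n dvd (int p - int j)"
  show "p = j"
  proof (rule ccontr)
    assume "p \<noteq> j"
    then have "int p - int j \<noteq> 0" by simp
    from dvd_imp_le_int [OF this dvd] assms show False by simp
  qed
qed simp

lemma idft_dft:
  assumes "j < n"
  shows "idft n (dft n x) j = x j"
proof -
  have n: "n > 0" using assms by simp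
  have kernel_product:
    "dft_kernel n (int k) p * dft_kernel n (- int k) j = dft_kernel n (int p - int j) k" for k p
    unfolding dft_kernel_def cis_mult
    by (rule arg_cong [where f = cis]) (use n in \<open>simp add: field_simps\<close>)
  have "(\<Sum>k<n. dft n x (int k) * dft_kernel n (- int k) j)
      = (\<Sum>p<n. x p * (\<Sum>k<n. dft_kernel n (int p - int j) k))"
    unfolding dft_def sum_distrib_right sum_distrib_left
    by (subst sum.swap, intro sum.cong refl) (simp add: kernel_product [symmetric] mult_ac)
  also have "\<dots> = (\<Sum>p<n. if p = j then x p * of_nat n else 0)"
    by (intro sum.cong refl) (simp add: sum_dft_kernel [OF n] int_dvd_diff_iff_eq [OF _ assms])
  also have "\<dots> = x j * of_nat n" using assms by simp
  finally show ?thesis using n unfolding idft_def by simp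
qed

lemma dft_idft:
  assumes "n > 0"
  shows "dft n (idft n c) l = c (l mod int n)"
proof -
  define r where "r = nat (l mod int n)"
  have r: "r < n" "int r = l mod int n"
    unfolding r_def using assms by (simp_all add: nat_less_iff)
  have kernel_product: "dft_kernel n (- int k) p * dft_kernel n l p = dft_kernel n (l - int k) p"
    for k p
    using dft_kernel_add_left [of n l "- int k" p] by (simp add: mult.commute)
  have dvd_iff: "int n dvd (l - int k) \<longleftrightarrow> k = r" if "k < n" for k
  proof -
    have "int n dvd (l - int k) \<longleftrightarrow> l mod int n = int k mod int n"
      by (simp add: mod_eq_dvd_iff)
    then show ?thesis using that r(2) by auto
  qed
  have "(\<Sum>p<n. (\<Sum>k<n. c (int k) * dft_kernel n (- int k) p) * dft_kernel n l p)
      = (\<Sum>k<n. c (int k) * (\<Sum>p<n. dft_kernel n (l - int k) p))"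
    unfolding sum_distrib_right sum_distrib_left
    by (subst sum.swap, intro sum.cong refl) (simp add: kernel_product [symmetric] mult_ac)
  also have "\<dots> = (\<Sum>k<n. if k = r then c (int k) * of_nat n else 0)"
    by (intro sum.cong refl) (simp add: sum_dft_kernel [OF assms] dvd_iff)
  also have "\<dots> = c (l mod int n) * of_nat n" using r by simp
  finally show ?thesis using assms unfolding dft_def idft_def
    by (simp add: sum_divide_distrib [symmetric])
qed

lemma sum_lessThan_symmetric:
  fixes g :: "nat \<Rightarrow> 'a::comm_semiring_1"
  assumes "n > 0" and symmetric: "\<And>k. 0 < k \<Longrightarrow> k < n \<Longrightarrow> g (n - k) = g k"
  shows "(\<Sum>k<n. g k) = g 0 + 2 * (\<Sum>k=1..(n - 1) div 2. g k) + (if even n then g (n div 2) else 0)"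
proof -
  define h where "h = (n - 1) div 2"
  have h: "h < n" unfolding h_def using assms by auto
  have "(\<Sum>k<n. g k) = g 0 + (\<Sum>k=1..<n. g k)"
    using assms by (simp add: lessThan_atLeast0 sum.atLeast_Suc_lessThan)
  also have "(\<Sum>k=1..<n. g k) = (\<Sum>k=1..h. g k) + (\<Sum>k=Suc h..<n. g k)"
    unfolding atLeastLessThanSuc_atLeastAtMost [symmetric]
    by (rule sum.atLeastLessThan_concat [symmetric]) (use h in auto)
  also have "(\<Sum>k=Suc h..<n. g k) = (if even n then g (n div 2) else 0) + (\<Sum>k=n-h..<n. g k)"
  proof (cases "even n")
    case True
    then have "Suc h = n div 2" "n - h = Suc (n div 2)"
      unfolding h_def using assms by (auto elim!: evenE)
    then show ?thesis using True h by (simp add: sum.atLeast_Suc_lessThan)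
  next
    case False
    then have "Suc h = n - h" unfolding h_def by (auto elim!: oddE)
    then show ?thesis using False by simp
  qed
  also have "(\<Sum>k=n-h..<n. g k) = (\<Sum>k=1..h. g k)"
    by (rule sum.reindex_bij_witness [of _ "\<lambda>k. n - k" "\<lambda>k. n - k"])
       (use h symmetric in \<open>auto simp: less_diff_conv2\<close>)
  finally show ?thesis unfolding h_def by (simp add: mult_2 add_ac)
qed

definition pc_char :: "nat \<Rightarrow> (nat \<Rightarrow> real) \<Rightarrow> int \<Rightarrow> complex" where
  "pc_char n u = dft n (\<lambda>p. complex_of_real (u p))"

definition pc_synth :: "nat \<Rightarrow> (int \<Rightarrow> complex) \<Rightarrow> nat \<Rightarrow> real" where
  "pc_synth n c = (\<lambda>j. if j < n then Re (idft n c j) else 0)"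

lemma pc_valid_synth: "pc_valid n (pc_synth n c)"
  unfolding pc_valid_def pc_synth_def by simp

lemma pc_synth_char:
  assumes "pc_valid n u"
  shows "pc_synth n (pc_char n u) = u"
proof
  fix j
  show "pc_synth n (pc_char n u) j = u j"
    using assms unfolding pc_synth_def pc_char_def pc_valid_def by (simp add: idft_dft)
qed

lemma pc_char_inject:
  assumes "pc_valid n u" "pc_valid n w" "pc_char n u = pc_char n w"
  shows "u = w"
  by (metis assms pc_synth_char)

lemma pc_char_mod: "n > 0 \<Longrightarrow> pc_char n u (k mod int n) = pc_char n u k"
  unfolding pc_char_def dft_def by (simp add: dft_kernel_mod_left)

lemma pc_char_uminus: "pc_char n u (- k) = cnj (pc_char n u k)"
  unfolding pc_char_def dft_def by (simp add: dft_kernel_uminus)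

lemma pc_char_synth:
  assumes "n > 0"
    and periodic: "\<And>k. c (k mod int n) = c k" and hermitian: "\<And>k. c (- k) = cnj (c k)"
  shows "pc_char n (pc_synth n c) = c"
proof
  fix l
  define y where "y = idft n c"
  have "pc_char n (pc_synth n c) l = (\<Sum>p<n. (y p + cnj (y p)) / 2 * dft_kernel n l p)"
    unfolding pc_char_def dft_def pc_synth_def y_def
    by (intro sum.cong refl) (simp add: complex_add_cnj)
  also have "\<dots> = (dft n y l + cnj (dft n y (- l))) / 2"
    unfolding dft_def
    by (simp add: dft_kernel_uminus ring_distribs sum.distrib flip: sum_divide_distrib)
  also have "\<dots> = c l"
    unfolding y_def dft_idft [OF assms(1)] periodic hermitian by (simp add: complex_add_cnj)
  finally show "pc_char n (pc_synth n c) l = c l" .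
qed

lemma pc_char_mult:
  assumes "n > 0"
  shows "pc_char n (pc_mult n u w) k = pc_char n u k * pc_char n w k"
proof -
  let ?e = "dft_kernel n k"
  have "pc_char n (pc_mult n u w) k = (\<Sum>j<n. \<Sum>p<n. \<Sum>q<n.
      if (p + q) mod n = j then of_real (u p * w q) * ?e j else 0)"
    unfolding pc_char_def dft_def pc_mult_def
    by (auto simp: sum_distrib_right intro!: sum.cong)
  also have "\<dots> = (\<Sum>p<n. \<Sum>q<n. \<Sum>j<n.
      if (p + q) mod n = j then of_real (u p * w q) * ?e j else 0)"
    by (rule trans [OF sum.swap sum.cong [OF refl sum.swap]])
  also have "\<dots> = (\<Sum>p<n. \<Sum>q<n. of_real (u p * w q) * ?e ((p + q) mod n))"
    using assms by (simp add: sum.delta)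
  also have "\<dots> = (\<Sum>p<n. \<Sum>q<n. (of_real (u p) * ?e p) * (of_real (w q) * ?e q))"
    by (simp add: dft_kernel_mod_right [OF assms] dft_kernel_add_right mult_ac)
  also have "\<dots> = pc_char n u k * pc_char n w k"
    unfolding pc_char_def dft_def by (simp add: sum_product)
  finally show ?thesis .
qed

lemma pc_char_one: "n > 0 \<Longrightarrow> pc_char n (pc_one n) k = 1"
  unfolding pc_char_def dft_def pc_one_def
  by (simp add: if_distrib [of complex_of_real] if_distrib [of "\<lambda>x. x * _"] dft_kernel_def
      cong: if_cong)

lemma pc_valid_mult: "pc_valid n (pc_mult n u w)"
  unfolding pc_valid_def pc_mult_def by simp

lemma pc_valid_one: "pc_valid n (pc_one n)"
  unfolding pc_valid_def pc_one_def by simp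

lemma pc_valid_pow: "pc_valid n (pc_pow n u i)"
  by (cases i) (simp_all add: pc_valid_mult pc_valid_one)

lemma pc_char_pow: "n > 0 \<Longrightarrow> pc_char n (pc_pow n u i) k = pc_char n u k ^ i"
  by (induction i) (simp_all add: pc_char_one pc_char_mult)

lemma pc_char_inv:
  assumes "n > 0" and nonzero: "\<And>k. pc_char n u k \<noteq> 0"
  shows "pc_valid n (pc_inv n u)" "pc_char n (pc_inv n u) k = inverse (pc_char n u k)"
proof -
  define w where "w = pc_synth n (\<lambda>k. inverse (pc_char n u k))"
  have char_w: "pc_char n w = (\<lambda>k. inverse (pc_char n u k))"
    unfolding w_def using assms(1)
    by (intro pc_char_synth) (simp_all add: pc_char_mod pc_char_uminus)
  have inverse_iff: "pc_valid n w' \<and> pc_mult n u w' = pc_one n \<longleftrightarrow> w' = w" for w'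
  proof
    assume "pc_valid n w' \<and> pc_mult n u w' = pc_one n"
    then have "pc_char n u k * pc_char n w' k = 1" for k
      using pc_char_mult [OF assms(1)] pc_char_one [OF assms(1)] by metis
    then have "pc_char n w' = pc_char n w"
      unfolding char_w using nonzero by (auto simp: field_simps)
    then show "w' = w"
      using \<open>pc_valid n w' \<and> _\<close> pc_char_inject [OF _ pc_valid_synth] unfolding w_def by blast
  next
    assume "w' = w"
    moreover have "pc_mult n u w = pc_one n"
      by (rule pc_char_inject [OF pc_valid_mult pc_valid_one])
         (simp add: fun_eq_iff pc_char_mult pc_char_one char_w nonzero assms(1))
    ultimately show "pc_valid n w' \<and> pc_mult n u w' = pc_one n"
      unfolding w_def by (simp add: pc_valid_synth)
  qed
  then have "pc_inv n u = w"
    unfolding pc_inv_def by simp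
  then show "pc_valid n (pc_inv n u)" "pc_char n (pc_inv n u) k = inverse (pc_char n u k)"
    unfolding w_def by (simp_all add: pc_valid_synth char_w [unfolded w_def])
qed

lemma pc_char_ipow:
  assumes "n > 0" and "m < 0 \<Longrightarrow> (\<forall>k. pc_char n u k \<noteq> 0)"
  shows "pc_valid n (pc_ipow n u m)" "pc_char n (pc_ipow n u m) k = pc_char n u k powi m"
  using assms pc_char_inv [OF assms(1)]
  by (simp_all add: pc_ipow_def pc_valid_pow pc_char_pow power_int_def power_inverse)

lemma pc_synth_expansion:
  assumes "n > 0"
    and periodic: "\<And>k. c (k mod int n) = c k" and hermitian: "\<And>k. c (- k) = cnj (c k)"
  shows "pc_synth n c = (\<lambda>j. e_plus n j * Re (c 0)
      + (if even n then e_minus n j * Re (c (int (n div 2))) else 0)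
      + (\<Sum>k=1..(n - 1) div 2. e_c n k j * Re (c (int k)) + e_s n k j * Im (c (int k))))"
proof
  fix j
  define g where "g k = Re (c (int k) * dft_kernel n (- int k) j)" for k
  have g_reflect: "g (n - k) = g k" if "0 < k" "k < n" for k
  proof -
    have "int (n - k) mod int n = (- int k) mod int n"
      using that by (simp add: of_nat_diff mod_diff_left_eq [symmetric])
    then have "c (int (n - k)) = cnj (c (int k))"
      by (metis periodic hermitian)
    moreover have "dft_kernel n (- int (n - k)) j = cnj (dft_kernel n (- int k) j)"
    proof -
      have "(- int (n - k)) mod int n = int k mod int n"
        using that by (simp add: of_nat_diff mod_diff_left_eq [symmetric])
      then show ?thesis
        by (metis dft_kernel_mod_left [OF assms(1)] dft_kernel_uminus minus_minus)
    qed
    ultimately show ?thesis unfolding g_def by simp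
  qed
  have g_zero: "g 0 = Re (c 0)"
    unfolding g_def dft_kernel_def by simp
  have g_half: "g (n div 2) = Re (c (int (n div 2))) * (-1) ^ j" if "even n"
  proof -
    have "dft_kernel n (- int (n div 2)) j = cis (- pi) ^ j"
      unfolding dft_kernel_def Complex.DeMoivre using that assms(1)
      by (auto elim!: evenE simp: mult.commute)
    also have "cis (- pi) = -1"
      by (simp add: complex_eq_iff)
    finally show ?thesis unfolding g_def by simp
  qed
  have g_pair: "g k = Re (c (int k)) * cos (2 * pi * real k * real j / real n)
      + Im (c (int k)) * sin (2 * pi * real k * real j / real n)" for k
    unfolding g_def dft_kernel_def by simp
  show "pc_synth n c j = e_plus n j * Re (c 0)
      + (if even n then e_minus n j * Re (c (int (n div 2))) else 0)
      + (\<Sum>k=1..(n - 1) div 2. e_c n k j * Re (c (int k)) + e_s n k j * Im (c (int k)))"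
  proof (cases "j < n")
    case True
    have "pc_synth n c j = (\<Sum>k<n. g k) / n"
      using True unfolding pc_synth_def idft_def g_def by (simp add: Re_sum)
    also have "\<dots> = g 0 / n + (if even n then g (n div 2) / n else 0)
        + (\<Sum>k=1..(n - 1) div 2. 2 / n * g k)"
      using sum_lessThan_symmetric [where g = g, OF assms(1) g_reflect]
      by (simp add: add_divide_distrib sum_distrib_left sum_divide_distrib)
    also have "\<dots> = e_plus n j * Re (c 0)
        + (if even n then e_minus n j * Re (c (int (n div 2))) else 0)
        + (\<Sum>k=1..(n - 1) div 2. e_c n k j * Re (c (int k)) + e_s n k j * Im (c (int k)))"
    proof -
      have "(\<Sum>k=1..(n - 1) div 2. 2 / n * g k)
          = (\<Sum>k=1..(n - 1) div 2. e_c n k j * Re (c (int k)) + e_s n k j * Im (c (int k)))"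
        using True by (simp add: g_pair e_c_def e_s_def algebra_simps)
      then show ?thesis
        using True by (simp add: g_zero g_half e_plus_def e_minus_def)
    qed
    finally show ?thesis .
  next
    case False
    then show ?thesis by (simp add: pc_synth_def e_plus_def e_minus_def e_c_def e_s_def)
  qed
qed

lemma pc_char_of_nat: "pc_char n u (int k) = Complex (v_c n k u) (v_s n k u)"
  unfolding pc_char_def dft_def dft_kernel_def v_c_def v_s_def
  by (simp add: complex_eq_iff Re_sum Im_sum)

lemma norm_pc_char: "cmod (pc_char n u (int k)) = rho n k u"
  unfolding pc_char_of_nat rho_def by (simp add: complex_norm)

lemma pc_char_polar: "pc_char n u (int k) = rcis (rho n k u) (phi n k u)"
  by (metis norm_pc_char pc_char_of_nat phi_def rcis_cmod_Arg)

lemma pc_char_zero: "pc_char n u 0 = of_real (v_plus n u)"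
  unfolding pc_char_def dft_def dft_kernel_def v_plus_def by simp

lemma pc_char_half:
  assumes "even n"
  shows "pc_char n u (int (n div 2)) = of_real (v_minus n u)"
  unfolding pc_char_def dft_def v_minus_def of_real_sum
proof (intro sum.cong refl)
  fix p
  assume "p \<in> {..<n}"
  then have "dft_kernel n (int (n div 2)) p = cis pi ^ p"
    unfolding dft_kernel_def Complex.DeMoivre using assms by (auto elim!: evenE simp: mult.commute)
  then show "of_real (u p) * dft_kernel n (int (n div 2)) p = of_real ((-1) ^ p * u p)"
    by simp
qed

lemma pc_char_nonzero:
  assumes "n > 0" and "v_plus n u \<noteq> 0" and "even n \<longrightarrow> v_minus n u \<noteq> 0"
    and rho_nonzero: "\<forall>k. 1 \<le> k \<and> k \<le> (n - 1) div 2 \<longrightarrow> rho n k u \<noteq> 0"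
  shows "pc_char n u k \<noteq> 0"
proof -
  define r where "r = nat (k mod int n)"
  have r: "r < n" "int r = k mod int n"
    unfolding r_def using assms(1) by (simp_all add: nat_less_iff)
  then have char_r: "pc_char n u k = pc_char n u (int r)"
    using pc_char_mod [OF assms(1)] by metis
  consider "r = 0" | "even n" "r = n div 2" | "1 \<le> r" "r \<le> (n - 1) div 2"
    | "1 \<le> n - r" "n - r \<le> (n - 1) div 2"
  proof -
    have "r = 0 \<or> (even n \<and> r = n div 2) \<or> (1 \<le> r \<and> r \<le> (n - 1) div 2)
        \<or> (1 \<le> n - r \<and> n - r \<le> (n - 1) div 2)"
      using r(1) by (cases "even n") (auto elim!: evenE oddE)
    then show ?thesis using that by blast
  qed
  then have "pc_char n u (int r) \<noteq> 0"
  proof cases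
    case 1
    then show ?thesis using assms(2) by (simp add: pc_char_zero)
  next
    case 2
    then show ?thesis using assms(3) by (simp add: pc_char_half)
  next
    case 3
    then show ?thesis using rho_nonzero norm_pc_char [of n u r] by force
  next
    case 4
    have "int r mod int n = (- int (n - r)) mod int n"
      using r(1) by (simp add: of_nat_diff mod_diff_left_eq [symmetric])
    then have "pc_char n u (int r) = cnj (pc_char n u (int (n - r)))"
      by (metis pc_char_mod [OF assms(1)] pc_char_uminus)
    then show ?thesis using 4 rho_nonzero norm_pc_char [of n u "n - r"] by force
  qed
  then show ?thesis using char_r by simp
qed

lemma rcis_power_int: "rcis r a powi m = rcis (r powi m) (of_int m * a)"
  by (simp add: rcis_def power_int_mult_distrib cis_power_int)

theorem mainTheorem11:
  fixes n :: nat and u :: "nat \<Rightarrow> real" and m :: int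
  assumes "n \<ge> 2"
    and "pc_valid n u"
    and "m \<le> 0 \<longrightarrow> v_plus n u \<noteq> 0 \<and> (even n \<longrightarrow> v_minus n u \<noteq> 0) \<and>
           (\<forall>k. 1 \<le> k \<and> k \<le> (n - 1) div 2 \<longrightarrow> rho n k u \<noteq> 0)"
  shows "(even n \<longrightarrow> pc_ipow n u m = (\<lambda>j.
            e_plus n j * v_plus n u powi m + e_minus n j * v_minus n u powi m
          + (\<Sum>k = 1..n div 2 - 1. rho n k u powi m *
               (e_c n k j * cos (real_of_int m * phi n k u)
                + e_s n k j * sin (real_of_int m * phi n k u)))))
       \<and> (odd n \<longrightarrow> pc_ipow n u m = (\<lambda>j.
            e_plus n j * v_plus n u powi m
          + (\<Sum>k = 1..(n - 1) div 2. rho n k u powi m *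
               (e_c n k j * cos (real_of_int m * phi n k u)
                + e_s n k j * sin (real_of_int m * phi n k u)))))"
proof -
  have n: "n > 0" using assms(1) by simp
  define c where "c k = pc_char n u k powi m" for k
  have nonzero: "\<forall>k. pc_char n u k \<noteq> 0" if "m < 0"
    using assms(3) that pc_char_nonzero [OF n] by auto
  have "pc_ipow n u m = pc_synth n (pc_char n (pc_ipow n u m))"
    by (rule pc_synth_char [symmetric]) (use pc_char_ipow [OF n nonzero] in simp)
  also have "pc_char n (pc_ipow n u m) = c"
    unfolding c_def using pc_char_ipow [OF n nonzero] by auto
  also have "pc_synth n c = (\<lambda>j. e_plus n j * Re (c 0)
      + (if even n then e_minus n j * Re (c (int (n div 2))) else 0)
      + (\<Sum>k=1..(n - 1) div 2. e_c n k j * Re (c (int k)) + e_s n k j * Im (c (int k))))"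
    by (rule pc_synth_expansion [OF n]) (simp_all add: c_def pc_char_mod [OF n] pc_char_uminus)
  finally have expansion: "pc_ipow n u m = \<dots>" .
  have "Re (c 0) = v_plus n u powi m"
    unfolding c_def pc_char_zero by (simp del: of_real_power_int add: of_real_power_int [symmetric])
  moreover have "Re (c (int (n div 2))) = v_minus n u powi m" if "even n"
    unfolding c_def pc_char_half [OF that]
    by (simp del: of_real_power_int add: of_real_power_int [symmetric])
  moreover have "c (int k) = rcis (rho n k u powi m) (of_int m * phi n k u)" for k
    unfolding c_def pc_char_polar by (rule rcis_power_int)
  moreover have "n div 2 - 1 = (n - 1) div 2" if "even n" using that by (auto elim!: evenE)
  ultimately show ?thesis
    unfolding expansion by (auto simp: fun_eq_iff algebra_simps)
qed

end
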